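(* Let $\mathcal{N}_1,\ldots,\mathcal{N}_l$ be subsets of $\mathcal{N}=\{1,\ldots,n\}$ with $\bigcup_{i=1}^l\mathcal{N}_i=\mathcal{N}$, satisfying the tree condition $$\mathcal{N}_i\cap\mathcal{N}_j\neq\emptyset\implies(\mathcal{N}_i\subseteq\mathcal{N}_j\text{ or }\mathcal{N}_j\subseteq\mathcal{N}_i).$$ For each $i$ let $\|\cdot\|_i:\mathbb{R}^{|\mathcal{N}_i|}\to\mathbb{R}_+$ be an arbitrary norm, and define $$\|z\|_A=\sum_{i=1}^l\|z_{\mathcal{N}_i}\|_i ,$$ where $\|z_{\mathcal{N}_i}\|_i$ means $\|\cdot\|_i$ applied to $(z_j)_{j\in\mathcal{N}_i}$. Let $\mathcal{G}=\{G_1,\ldots,G_g\}$ be the collection of distinct inclusion-maximal sets among $\mathcal{N}_1,\ldots,\mathcal{N}_l$ (these form a partition of $\mathcal{N}$). Then $\|\cdot\|_A$ is decomposable with respect to $\mathcal{G}$.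
   Context: For $z\in\mathbb{R}^n$ and $\Lambda\subseteq\mathcal{N}$, $z_\Lambda\in\mathbb{R}^n$ denotes the vector with $(z_\Lambda)_i=z_i$ for $i\in\Lambda$ and $0$ otherwise; $\mathrm{supp}(u)=\{i:u_i\neq0\}$. For a partition $\mathcal{G}=\{G_1,\ldots,G_g\}$ of $\mathcal{N}$ and $S\subseteq\{1,\ldots,g\}$ let $G_S=\bigcup_{i\in S}G_i$. A norm $\|\cdot\|$ on $\mathbb{R}^n$ is decomposable with respect to $\mathcal{G}$ if, whenever $u,v\in\mathbb{R}^n$ satisfy $\mathrm{supp}(u)\subseteq G_{S_u}$, $\mathrm{supp}(v)\subseteq G_{S_v}$ with $S_u,S_v$ disjoint subsets of $\{1,\ldots,g\}$, one has $\|u+v\|=\|u\|+\|v\|$. *)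

theory Defs
  imports "HOL-Analysis.Analysis"
begin

text \<open>Vectors in R^n are modelled as real^'n for a finite index type 'n (so N = UNIV).\<close>

definition restr :: "'n set \<Rightarrow> real^'n \<Rightarrow> real^'n" where
  "restr \<Lambda> z = (\<chi> j. if j \<in> \<Lambda> then z $ j else 0)"

definition supp_vec :: "real^'n \<Rightarrow> 'n set" where
  "supp_vec u = {i. u $ i \<noteq> 0}"

text \<open>A norm on R^{|Lambda|}, represented as a function on the coordinate subspace
  {x. supp x \<subseteq> Lambda} of R^n (values outside that subspace are irrelevant).\<close>
definition coord_norm :: "'n set \<Rightarrow> (real^'n \<Rightarrow> real) \<Rightarrow> bool" where
  "coord_norm \<Lambda> nu \<longleftrightarrow>
     (\<forall>x. supp_vec x \<subseteq> \<Lambda> \<longrightarrow> nu x \<ge> 0) \<and>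
     (\<forall>x. supp_vec x \<subseteq> \<Lambda> \<longrightarrow> (nu x = 0 \<longleftrightarrow> x = 0)) \<and>
     (\<forall>x c. supp_vec x \<subseteq> \<Lambda> \<longrightarrow> nu (c *\<^sub>R x) = \<bar>c\<bar> * nu x) \<and>
     (\<forall>x y. supp_vec x \<subseteq> \<Lambda> \<longrightarrow> supp_vec y \<subseteq> \<Lambda> \<longrightarrow> nu (x + y) \<le> nu x + nu y)"

text \<open>Decomposability w.r.t. a partition given as a set of blocks; a set of group
  indices S corresponds to a subset of the blocks.\<close>
definition decomposable :: "(real^'n \<Rightarrow> real) \<Rightarrow> 'n set set \<Rightarrow> bool" where
  "decomposable f \<G> \<longleftrightarrow>
     (\<forall>u v Su Sv. Su \<subseteq> \<G> \<longrightarrow> Sv \<subseteq> \<G> \<longrightarrow> Su \<inter> Sv = {} \<longrightarrow>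
        supp_vec u \<subseteq> \<Union>Su \<longrightarrow> supp_vec v \<subseteq> \<Union>Sv \<longrightarrow> f (u + v) = f u + f v)"

end

theory Submission
  imports Defs
begin

text \<open>Every index set \<open>N\<^sub>i\<close> lies inside an inclusion-maximal set of the tree-structured
  (laminar) family, so it cannot meet the supports of both \<open>u\<close> and \<open>v\<close> when these lie on
  disjoint collections of maximal sets. Hence one of the restrictions of \<open>u\<close>, \<open>v\<close> to \<open>N\<^sub>i\<close>
  vanishes, and the sum defining the norm splits term by term.\<close>

definition laminar :: "'a set set \<Rightarrow> bool" where
  "laminar F \<longleftrightarrow> (\<forall>A\<in>F. \<forall>B\<in>F. A \<inter> B \<noteq> {} \<longrightarrow> A \<subseteq> B \<or> B \<subseteq> A)"

definition maximal_sets :: "'a set set \<Rightarrow> 'a set set" where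
  "maximal_sets F = {A \<in> F. \<not> (\<exists>B\<in>F. A \<subset> B)}"

lemma laminar_subset_maximal:
  assumes "laminar F" "A \<in> F" "M \<in> maximal_sets F" "A \<inter> M \<noteq> {}"
  shows "A \<subseteq> M"
proof -
  have "M \<in> F" "\<not> M \<subset> A"
    using assms(2,3) by (auto simp: maximal_sets_def)
  moreover have "A \<subseteq> M \<or> M \<subseteq> A"
    using assms(1,2,4) \<open>M \<in> F\<close> unfolding laminar_def by blast
  ultimately show ?thesis
    by blast
qed

lemma laminar_maximal_sets_disjoint:
  assumes "laminar F" "M \<in> maximal_sets F" "M' \<in> maximal_sets F" "M \<inter> M' \<noteq> {}"
  shows "M = M'"
proof
  have "M \<in> F" "M' \<in> F"
    using assms(2,3) by (simp_all add: maximal_sets_def)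
  show "M \<subseteq> M'"
    by (rule laminar_subset_maximal[OF assms(1) \<open>M \<in> F\<close> assms(3,4)])
  show "M' \<subseteq> M"
    using assms(4) by (intro laminar_subset_maximal[OF assms(1) \<open>M' \<in> F\<close> assms(2)]) blast
qed

lemma laminar_meets_one_side:
  assumes lam: "laminar F" and A: "A \<in> F"
    and Su: "Su \<subseteq> maximal_sets F" and Sv: "Sv \<subseteq> maximal_sets F" and disj: "Su \<inter> Sv = {}"
  shows "A \<inter> \<Union>Su = {} \<or> A \<inter> \<Union>Sv = {}"
proof (rule ccontr)
  assume "\<not> ?thesis"
  then obtain M M' where M: "M \<in> Su" "A \<inter> M \<noteq> {}" and M': "M' \<in> Sv" "A \<inter> M' \<noteq> {}"
    by blast
  have maxM: "M \<in> maximal_sets F" and maxM': "M' \<in> maximal_sets F"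
    using M(1) M'(1) Su Sv by blast+
  have "A \<subseteq> M" "A \<subseteq> M'"
    using laminar_subset_maximal[OF lam A maxM M(2)] laminar_subset_maximal[OF lam A maxM' M'(2)] .
  then have "M \<inter> M' \<noteq> {}"
    using M(2) by blast
  then have "M = M'"
    by (rule laminar_maximal_sets_disjoint[OF lam maxM maxM'])
  then show False
    using M M' disj by blast
qed

lemma restr_add: "restr A (u + v) = restr A u + restr A v"
  by (simp add: restr_def vec_eq_iff)

lemma restr_eq_0_if_disjoint: "A \<inter> supp_vec u = {} \<Longrightarrow> restr A u = 0"
  by (auto simp: restr_def vec_eq_iff supp_vec_def)

lemma coord_norm_zero: "coord_norm A nu \<Longrightarrow> nu 0 = 0"
  unfolding coord_norm_def supp_vec_def by auto

lemma decomposable_sum_restr: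
  assumes zero: "\<And>i. i \<in> I \<Longrightarrow> nu i 0 = 0"
    and one_side: "\<And>i Su Sv. i \<in> I \<Longrightarrow> Su \<subseteq> G \<Longrightarrow> Sv \<subseteq> G \<Longrightarrow> Su \<inter> Sv = {} \<Longrightarrow>
                     Ns i \<inter> \<Union>Su = {} \<or> Ns i \<inter> \<Union>Sv = {}"
  shows "decomposable (\<lambda>z. \<Sum>i\<in>I. nu i (restr (Ns i) z)) G"
  unfolding decomposable_def
proof (intro allI impI)
  fix u v Su Sv
  assume "Su \<subseteq> G" "Sv \<subseteq> G" "Su \<inter> Sv = {}"
    and u: "supp_vec u \<subseteq> \<Union>Su" and v: "supp_vec v \<subseteq> \<Union>Sv"
  have "nu i (restr (Ns i) (u + v)) = nu i (restr (Ns i) u) + nu i (restr (Ns i) v)"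
    if i: "i \<in> I" for i
  proof -
    have "Ns i \<inter> supp_vec u = {} \<or> Ns i \<inter> supp_vec v = {}"
      using one_side[OF i \<open>Su \<subseteq> G\<close> \<open>Sv \<subseteq> G\<close> \<open>Su \<inter> Sv = {}\<close>] u v by blast
    then have "restr (Ns i) u = 0 \<or> restr (Ns i) v = 0"
      using restr_eq_0_if_disjoint by blast
    then show ?thesis
      using zero[OF i] by (auto simp: restr_add)
  qed
  then show "(\<Sum>i\<in>I. nu i (restr (Ns i) (u + v))) =
             (\<Sum>i\<in>I. nu i (restr (Ns i) u)) + (\<Sum>i\<in>I. nu i (restr (Ns i) v))"
    by (simp add: sum.distrib)
qed

theorem corollary2p3:
  fixes Ns :: "nat \<Rightarrow> 'n::finite set"
    and nu :: "nat \<Rightarrow> real^'n \<Rightarrow> real"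
    and l :: nat
  assumes cover: "(\<Union>i<l. Ns i) = UNIV"
    and tree: "\<forall>i<l. \<forall>j<l. Ns i \<inter> Ns j \<noteq> {} \<longrightarrow> Ns i \<subseteq> Ns j \<or> Ns j \<subseteq> Ns i"
    and norms: "\<forall>i<l. coord_norm (Ns i) (nu i)"
  shows "decomposable (\<lambda>z. \<Sum>i<l. nu i (restr (Ns i) z))
           {Ns i | i. i < l \<and> \<not> (\<exists>j<l. Ns i \<subset> Ns j)}"
proof -
  let ?F = "Ns ` {..<l}"
  have lam: "laminar ?F"
    using tree unfolding laminar_def by blast
  have G: "{Ns i | i. i < l \<and> \<not> (\<exists>j<l. Ns i \<subset> Ns j)} = maximal_sets ?F"
    unfolding maximal_sets_def by blast
  show ?thesis
    unfolding G
  proof (rule decomposable_sum_restr)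
    show "nu i 0 = 0" if "i \<in> {..<l}" for i
      using norms that coord_norm_zero by blast
    show "Ns i \<inter> \<Union>Su = {} \<or> Ns i \<inter> \<Union>Sv = {}"
      if "i \<in> {..<l}" "Su \<subseteq> maximal_sets ?F" "Sv \<subseteq> maximal_sets ?F" "Su \<inter> Sv = {}"
      for i Su Sv
      using laminar_meets_one_side[OF lam _ that(2-4)] that(1) by blast
  qed
qed

end
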